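(* Let $a\in(-\infty,1)$ and $\omega\in\mathbb D_a$. Then for every $x>0$, $$\frac{\eta_a}{\pi}\le r(\omega)\le\min\left\{\frac{2(x+1)}{\pi x}(1-\omega(x))^{1/2},\ \frac2\pi\right\}.$$
   Context: Let $\rho(x)=(1+|x|)^{-1/2}$ and $\eta_a=\frac{1}{2^{9/2}(4+|a|)^3}$. $\mathbb D_a$ is the set of continuous even functions $\omega$ on $\mathbb R$ with $\|\rho\omega\|_{L^\infty}<\infty$ such that $\omega(0)=1$; $(1-x^2)_+\le\omega(x)\le1$ for all $x$; $\omega$ is non-increasing on $[0,\infty)$; $s\mapsto\omega(\sqrt s)$ is convex on $[0,\infty)$; and the left derivative satisfies $\omega'_-(1/2)\le-\eta_a$. $r(\omega)=\frac1\pi\int_0^\infty\frac{\omega(0)-\omega(y)}{y^2}\,dy$. *)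

theory Defs
  imports "HOL-Analysis.Analysis"
begin

definition rho :: "real \<Rightarrow> real" where
  "rho x = 1 / sqrt (1 + \<bar>x\<bar>)"

definition eta :: "real \<Rightarrow> real" where
  "eta a = 1 / (2 powr (9/2) * (4 + \<bar>a\<bar>) ^ 3)"

definition has_left_deriv :: "(real \<Rightarrow> real) \<Rightarrow> real \<Rightarrow> real \<Rightarrow> bool" where
  "has_left_deriv w d t \<longleftrightarrow> ((\<lambda>h. (w (t + h) - w t) / h) \<longlongrightarrow> d) (at_left 0)"

definition DD :: "real \<Rightarrow> (real \<Rightarrow> real) set" where
  "DD a = {w. continuous_on UNIV w
      \<and> (\<forall>x. w (-x) = w x)
      \<and> bounded (range (\<lambda>x. rho x * w x))
      \<and> w 0 = 1
      \<and> (\<forall>x. max 0 (1 - x^2) \<le> w x \<and> w x \<le> 1)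
      \<and> (\<forall>x y. 0 \<le> x \<longrightarrow> x \<le> y \<longrightarrow> w y \<le> w x)
      \<and> convex_on {0..} (\<lambda>s. w (sqrt s))
      \<and> (\<exists>d. has_left_deriv w d (1/2) \<and> d \<le> - eta a)}"

definition r_fun :: "(real \<Rightarrow> real) \<Rightarrow> real" where
  "r_fun w = (1 / pi) * integral {0<..} (\<lambda>y. (w 0 - w y) / y^2)"

end

theory Submission
  imports Defs
begin

text \<open>
  Write the integrand of \<open>r\<close> as \<open>q(y) = (1 - \<omega>(y))/y\<^sup>2\<close>. Convexity of \<open>s \<mapsto> \<omega>(\<surd>s)\<close>
  says exactly that \<open>q\<close> is a chord slope from the origin, hence non-increasing on \<open>(0,\<infinity>)\<close>;
  monotonicity of \<open>\<omega>\<close> gives \<open>q(y) \<le> (1 - \<omega>(x))/y\<^sup>2\<close> for \<open>y \<le> x\<close>. So on each side of a point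
  \<open>q\<close> is squeezed by functions of the form \<open>min A (B/y\<^sup>2)\<close>, whose integral over \<open>(0,\<infinity>)\<close>
  is \<open>2\<surd>(AB)\<close>. Comparing with the point \<open>x\<close> gives the upper bound, \<open>(1-y\<^sup>2)\<^sub>+ \<le> \<omega>\<close> gives
  \<open>2/\<pi>\<close>, and comparing with \<open>1/2\<close> gives \<open>r \<ge> 4(1 - \<omega>(1/2))/\<pi>\<close>; finally the same slope
  monotonicity bounds the left derivative: \<open>\<omega>'\<^sub>-(1/2) \<ge> -4(1 - \<omega>(1/2))\<close>.
\<close>

lemma has_integral_min_inverse_square:
  fixes A B :: real
  assumes "A > 0" and "B > 0"
  shows "((\<lambda>y. min A (B / y^2)) has_integral 2 * sqrt (A * B)) {0<..}"
proof -
  define c where "c = sqrt (B / A)"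
  have c: "c > 0" and c2: "c^2 = B / A"
    using assms by (simp_all add: c_def)
  have head: "((\<lambda>y. min A (B / y^2)) has_integral A * c) {0<..<c}"
  proof -
    have "((\<lambda>y. A) has_integral A * c) {0..c}"
      using has_integral_const_real[of A 0 c] c by (simp add: mult.commute)
    then have "((\<lambda>y. A) has_integral A * c) {0<..<c}"
      using has_integral_Icc_iff_Ioo by blast
    moreover have "min A (B / y^2) = A" if "y \<in> {0<..<c}" for y
    proof -
      have "y^2 \<le> c^2" using that by (intro power_mono) auto
      then show ?thesis using that assms c2 by (simp add: field_simps)
    qed
    ultimately show ?thesis using has_integral_cong by (metis (no_types, lifting))
  qed
  have tail: "((\<lambda>y. min A (B / y^2)) has_integral B / c) {c..}"
  proof -
    have "((\<lambda>y. B * (1 / y^2)) has_integral B * (1 / c)) {c..}"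
      using has_integral_inverse_power_to_inf[of 2 c] c by (intro has_integral_mult_right) simp
    moreover have "min A (B / y^2) = B * (1 / y^2)" if "y \<in> {c..}" for y
    proof -
      have "c^2 \<le> y^2" using that c by (intro power_mono) auto
      then show ?thesis using that assms c c2 by (simp add: field_simps)
    qed
    ultimately show ?thesis using has_integral_cong by (metis (no_types, lifting) times_divide_eq_right mult_1_right)
  qed
  have "((\<lambda>y. min A (B / y^2)) has_integral A * c + B / c) ({0<..<c} \<union> {c..})"
  proof (rule has_integral_Un[OF head tail])
    have "{0<..<c} \<inter> {c..} = {}" by auto
    then show "negligible ({0<..<c} \<inter> {c..})" by simp
  qed
  moreover have "{0<..<c} \<union> {c..} = {0<..}" using c by auto
  moreover have "A * c = sqrt (A * B)" and "B / c = sqrt (A * B)"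
    using assms by (simp_all add: c_def real_sqrt_divide real_sqrt_mult field_simps)
  ultimately show ?thesis by simp
qed

lemma has_integral_min_inverse_square_nonneg:
  fixes A B :: real
  assumes "A \<ge> 0" and "B \<ge> 0"
  shows "((\<lambda>y. min A (B / y^2)) has_integral 2 * sqrt (A * B)) {0<..}"
proof (cases "A = 0 \<or> B = 0")
  case True
  then have "(\<lambda>y. min A (B / y^2)) = (\<lambda>y. 0)" using assms by fastforce
  then show ?thesis using True by auto
qed (use assms has_integral_min_inverse_square in auto)

definition r_integrand :: "(real \<Rightarrow> real) \<Rightarrow> real \<Rightarrow> real" where
  "r_integrand w y = (w 0 - w y) / y^2"

lemma r_fun_eq_integral_r_integrand: "r_fun w = integral {0<..} (r_integrand w) / pi"
  unfolding r_fun_def r_integrand_def by simp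

lemma DD_D:
  assumes "w \<in> DD a"
  shows "continuous_on UNIV w"
    and "\<And>y. max 0 (1 - y^2) \<le> w y" and "\<And>y. w y \<le> 1" and "w 0 = 1"
    and "\<And>y z. 0 \<le> y \<Longrightarrow> y \<le> z \<Longrightarrow> w z \<le> w y"
    and "convex_on {0..} (\<lambda>s. w (sqrt s))"
    and "\<exists>d. has_left_deriv w d (1/2) \<and> d \<le> - eta a"
  using assms unfolding DD_def by auto

lemma r_integrand_antimono:
  assumes "convex_on {0..} (\<lambda>s. w (sqrt s))" and "0 < y" and "y \<le> z"
  shows "r_integrand w z \<le> r_integrand w y"
proof (cases "y = z")
  case False
  have z: "0 < z" using assms(2,3) by linarith
  have "y^2 < z^2" using assms False by (simp add: power_strict_mono)
  then have "(w (sqrt 0) - w (sqrt (y^2))) / (0 - y^2) \<le> (w (sqrt 0) - w (sqrt (z^2))) / (0 - z^2)"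
    using assms(2) by (intro convex_on_slope_le(1)[OF assms(1)]) auto
  then show ?thesis
    using assms(2) z by (simp add: r_integrand_def abs_of_pos)
qed simp

lemma r_integrand_bounds:
  assumes "\<And>y. max 0 (1 - y^2) \<le> w y" and "\<And>y. w y \<le> 1" and "w 0 = 1" and "y > 0"
  shows "0 \<le> r_integrand w y" and "r_integrand w y \<le> min 1 (1 / y^2)"
  using assms(1,2)[of y] assms(3,4) by (auto simp: r_integrand_def field_simps)

lemma r_integrand_integrable:
  assumes "continuous_on UNIV w"
    and "\<And>y. max 0 (1 - y^2) \<le> w y" and "\<And>y. w y \<le> 1" and "w 0 = 1"
  shows "r_integrand w integrable_on {0<..}"
proof (rule measurable_bounded_by_integrable_imp_integrable_real)
  have "continuous_on {0<..} (r_integrand w)"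
    unfolding r_integrand_def
    by (intro continuous_intros continuous_on_subset[OF assms(1)]) auto
  then show "r_integrand w \<in> borel_measurable (lebesgue_on {0<..})"
    by (rule continuous_imp_measurable_on_sets_lebesgue) simp
  show "(\<lambda>y::real. min 1 (1 / y^2)) integrable_on {0<..}"
    using has_integral_integrable[OF has_integral_min_inverse_square[of 1 1]] by simp
  show "\<bar>r_integrand w y\<bar> \<le> min 1 (1 / y^2)" if "y \<in> {0<..}" for y
    using r_integrand_bounds[OF assms(2-4)] that by auto
qed simp

lemma left_deriv_ge_of_convex_sqrt:
  assumes cvx: "convex_on {0..} (\<lambda>s. w (sqrt s))"
    and deriv: "has_left_deriv w d t" and "t > 0"
  shows "- 2 * (w 0 - w t) / t \<le> d"
proof -
  define c where "c = (w 0 - w t) / t^2"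
  have "eventually (\<lambda>h. h \<in> {- t<..<0}) (at_left (0::real))"
    by (rule eventually_at_left_real) (use \<open>t > 0\<close> in simp)
  then have "eventually (\<lambda>h. - (2 * t + h) * c \<le> (w (t + h) - w t) / h) (at_left 0)"
  proof (rule eventually_mono)
    fix h assume h: "h \<in> {- t<..<0}"
    then have "r_integrand w t \<le> r_integrand w (t + h)"
      by (intro r_integrand_antimono[OF cvx]) auto
    then have "(t + h)^2 * c \<le> w 0 - w (t + h)"
      using h by (simp add: r_integrand_def c_def field_simps)
    then have "w (t + h) - w t \<le> - h * (2 * t + h) * c"
      using \<open>t > 0\<close> by (simp add: c_def field_simps power2_eq_square)
    then show "- (2 * t + h) * c \<le> (w (t + h) - w t) / h"
      using h by (simp add: field_simps)
  qed
  moreover have "((\<lambda>h. - (2 * t + h) * c) \<longlongrightarrow> - (2 * t + 0) * c) (at_left 0)"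
    by (intro tendsto_intros)
  ultimately have "- (2 * t + 0) * c \<le> d"
    using deriv unfolding has_left_deriv_def by (intro tendsto_le[of "at_left 0"]) auto
  moreover have "- (2 * t + 0) * c = - 2 * (w 0 - w t) / t"
    using \<open>t > 0\<close> by (simp add: c_def power2_eq_square field_simps)
  ultimately show ?thesis by simp
qed

lemma r_fun_le_two_over_pi:
  assumes "w \<in> DD a"
  shows "r_fun w \<le> 2 / pi"
proof -
  have "integral {0<..} (r_integrand w) \<le> 2 * sqrt (1 * 1)"
    using r_integrand_integrable[OF DD_D(1-4)[OF assms]]
      r_integrand_bounds(2)[OF DD_D(2-4)[OF assms]]
    by (intro has_integral_le[OF _ has_integral_min_inverse_square[of 1 1]]) auto
  then show ?thesis by (simp add: r_fun_eq_integral_r_integrand divide_right_mono)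
qed

lemma r_fun_le_sqrt:
  assumes "w \<in> DD a" and "x > 0"
  shows "r_fun w \<le> 2 * (x + 1) / (pi * x) * sqrt (1 - w x)"
proof -
  note w = DD_D[OF assms(1)]
  define \<delta> where "\<delta> = 1 - w x"
  have \<delta>: "0 \<le> \<delta>" using w(3)[of x] by (simp add: \<delta>_def)
  have "r_integrand w y \<le> min 1 (\<delta> / y^2) + min (\<delta> / x^2) (1 / y^2)" if "y > 0" for y
  proof (cases "y \<le> x")
    case True
    then have "r_integrand w y \<le> min 1 (\<delta> / y^2)"
      using w(5)[of y x] \<open>y > 0\<close> r_integrand_bounds(2)[OF w(2-4) \<open>y > 0\<close>]
      by (simp add: r_integrand_def \<delta>_def w(4) divide_right_mono)
    moreover have "0 \<le> min (\<delta> / x^2) (1 / y^2)" using \<delta> by simp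
    ultimately show ?thesis by linarith
  next
    case False
    then have "r_integrand w y \<le> min (\<delta> / x^2) (1 / y^2)"
      using r_integrand_antimono[OF w(6) assms(2), of y] r_integrand_bounds(2)[OF w(2-4) \<open>y > 0\<close>]
      by (simp add: r_integrand_def \<delta>_def w(4))
    moreover have "0 \<le> min 1 (\<delta> / y^2)" using \<delta> by simp
    ultimately show ?thesis by linarith
  qed
  then have "integral {0<..} (r_integrand w) \<le> 2 * sqrt (1 * \<delta>) + 2 * sqrt (\<delta> / x^2 * 1)"
    using r_integrand_integrable[OF w(1-4)] \<delta>
    by (intro has_integral_le[OF _ has_integral_add[OF
          has_integral_min_inverse_square_nonneg has_integral_min_inverse_square_nonneg]]) auto
  also have "\<dots> = 2 * (x + 1) / x * sqrt \<delta>"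
    using assms(2) by (simp add: real_sqrt_divide field_simps)
  finally have "r_fun w \<le> 2 * (x + 1) / x * sqrt \<delta> / pi"
    unfolding r_fun_eq_integral_r_integrand by (intro divide_right_mono) simp_all
  then show ?thesis by (simp add: \<delta>_def ac_simps)
qed

lemma r_fun_ge_secant:
  assumes "w \<in> DD a" and "t > 0"
  shows "2 * (1 - w t) / (pi * t) \<le> r_fun w"
proof -
  note w = DD_D[OF assms(1)]
  define c where "c = 1 - w t"
  have c: "0 \<le> c" using w(3)[of t] by (simp add: c_def)
  have "min (c / t^2) (c / y^2) \<le> r_integrand w y" if "y > 0" for y
  proof (cases "y \<le> t")
    case True
    then show ?thesis
      using r_integrand_antimono[OF w(6) that True] by (simp add: r_integrand_def c_def w(4))
  next
    case False
    then have "c / y^2 \<le> r_integrand w y"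
      using w(5)[of t y] assms(2) by (simp add: r_integrand_def c_def w(4) divide_right_mono)
    then show ?thesis by simp
  qed
  then have "2 * sqrt (c / t^2 * c) \<le> integral {0<..} (r_integrand w)"
    using r_integrand_integrable[OF w(1-4)] c
    by (intro has_integral_le[OF has_integral_min_inverse_square_nonneg]) auto
  moreover have "2 * sqrt (c / t^2 * c) = 2 * c / t"
    using c assms(2) by (simp add: real_sqrt_divide real_sqrt_mult)
  ultimately have "2 * c / t / pi \<le> r_fun w"
    unfolding r_fun_eq_integral_r_integrand by (intro divide_right_mono) simp_all
  then show ?thesis by (simp add: c_def ac_simps)
qed

theorem mainTheorem7:
  fixes a x :: real and w :: "real \<Rightarrow> real"
  assumes "a < 1" and "w \<in> DD a" and "x > 0"
  shows "eta a / pi \<le> r_fun w \<and>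
         r_fun w \<le> min (2 * (x + 1) / (pi * x) * sqrt (1 - w x)) (2 / pi)"
proof -
  obtain d where "has_left_deriv w d (1/2)" and "d \<le> - eta a"
    using DD_D(7)[OF assms(2)] by blast
  then have "eta a \<le> 4 * (1 - w (1/2))"
    using left_deriv_ge_of_convex_sqrt[OF DD_D(6)[OF assms(2)]] DD_D(4)[OF assms(2)] by fastforce
  then have "eta a / pi \<le> 2 * (1 - w (1/2)) / (pi * (1/2))"
    by (simp add: divide_right_mono)
  also have "\<dots> \<le> r_fun w"
    using r_fun_ge_secant[OF assms(2), of "1/2"] by simp
  finally show ?thesis
    using r_fun_le_sqrt[OF assms(2,3)] r_fun_le_two_over_pi[OF assms(2)] by simp
qed

end
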